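(* Suppose $\gamma=1$, i.e. $\delta=\lambda$. Then for $z\in[0,1)$, $$\mathbb{E}[z^B]=\left(\frac{1-\xi}{1-\xi/N}\right)^{N\mu/\xi}=(1-\phi y)^{\theta\frac{1-y}{y}},$$ where $\xi=\frac{q-z}{1-z}$, $y=\frac{z-q}{1-q}$, $\phi=1-\frac1N$ and $\theta=N\mu$. For $q=0$ the expression at $y=0$ is interpreted by continuity. In particular, if $q>0$, $$\mathbb{P}(B=0)=\left(1+\frac{q\phi}{1-q}\right)^{-\theta/q}.$$
   Context: Model: fix $\delta>0$, $\nu>0$ and $\alpha>\beta\ge 0$, and put $\lambda=\alpha-\beta>0$. The wild-type population is deterministic, of size $e^{\delta t}$ at time $t\ge0$. Mutants arise at the points of an inhomogeneous Poisson process on $[0,\infty)$ with intensity $\nu e^{\delta t}$. Each mutant arising at time $s$ founds a clone that evolves as a linear birth–death process started from one cell, with per-capita birth rate $\alpha$ and death rate $\beta$. Clones are independent of each other and of the Poisson process. For $N>1$ let $\tau=\log N/\delta$, and let $B$ be the total number of mutant cells alive at time $\tau$. Notation: $q=\beta/\alpha\in[0,1)$, $\gamma=\delta/\lambda$, $\mu=\nu/\alpha$. *)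

theory Defs
  imports "HOL-Analysis.Analysis"
begin

text \<open>Transition law of a linear birth-death process (birth rate a, death rate b,
  a > b >= 0) started from one cell: probability of n cells alive at time t
  (Kendall's classical formula).\<close>
definition bd_pmf :: "real \<Rightarrow> real \<Rightarrow> real \<Rightarrow> nat \<Rightarrow> real" where
  "bd_pmf a b t n =
     (let E = exp ((a - b) * t);
          p0 = b * (E - 1) / (a * E - b);
          eta = a * (E - 1) / (a * E - b)
      in if n = 0 then p0 else (1 - p0) * (1 - eta) * eta ^ (n - 1))"

text \<open>Intensity (mean number) of mutant clones founded in [0,tau] that have exactly
  n cells at time tau: integral of the mutation intensity nu e^(delta s) times the
  probability that a clone born at s has n cells at tau.\<close>
definition clone_intensity :: "real \<Rightarrow> real \<Rightarrow> real \<Rightarrow> real \<Rightarrow> real \<Rightarrow> nat \<Rightarrow> real" where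
  "clone_intensity \<delta> \<nu> a b tau n =
     integral {0..tau} (\<lambda>s. \<nu> * exp (\<delta> * s) * bd_pmf a b (tau - s) n)"

fun conv_pow :: "(nat \<Rightarrow> real) \<Rightarrow> nat \<Rightarrow> nat \<Rightarrow> real" where
  "conv_pow c 0 m = (if m = 0 then 1 else 0)"
| "conv_pow c (Suc k) m = (\<Sum>j\<le>m. c j * conv_pow c k (m - j))"

text \<open>The number of
  mutations in [0,tau] is Poisson with mean Lambda = integral of nu e^(delta s);
  given k mutations, the founding times are iid with density nu e^(delta s)/Lambda,
  and clones are independent, so
  P(B = m) = sum_k e^(-Lambda) Lambda^k / k! * r^{*k}(m) with r = c / Lambda, i.e.
  P(B = m) = sum_k e^(-Lambda) / k! * c^{*k}(m).\<close>
definition B_pmf :: "real \<Rightarrow> real \<Rightarrow> real \<Rightarrow> real \<Rightarrow> real \<Rightarrow> nat \<Rightarrow> real" where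
  "B_pmf \<delta> \<nu> a b N m =
     (let tau = ln N / \<delta>;
          Lam = integral {0..tau} (\<lambda>s. \<nu> * exp (\<delta> * s))
      in (\<Sum>k. exp (- Lam) / fact k * conv_pow (clone_intensity \<delta> \<nu> a b tau) k m))"

definition B_pgf :: "real \<Rightarrow> real \<Rightarrow> real \<Rightarrow> real \<Rightarrow> real \<Rightarrow> real \<Rightarrow> real" where
  "B_pgf \<delta> \<nu> a b N z = (\<Sum>m. B_pmf \<delta> \<nu> a b N m * z ^ m)"

end

theory Submission
  imports Defs
begin

text \<open>Given the Poisson number of clones, their founding times are i.i.d. and the clones evolve
  independently, so B is compound Poisson:
  E[z^B] = exp (integral over [0, \<tau>] of \<nu> exp(\<delta> s) (G(\<tau> - s, z) - 1) ds),
  where G(t, z) is Kendall's generating function of a birth-death clone of age t.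
  When \<delta> = \<alpha> - \<beta>, the factor exp(\<delta> s) cancels the age dependence of G: since
  exp(\<delta> s) exp(\<delta> (\<tau> - s)) = N, the integrand is a constant multiple of
  1 / (exp(\<delta> (\<tau> - s)) - \<xi>), whose integral is a difference of logarithms.
  This gives the first formula; the second one and P(B = 0) are the substitutions
  y = -\<xi> / (1 - \<xi>) and z = 0.\<close>

lemma conv_pow_nonneg:
  assumes "\<And>j. 0 \<le> c j"
  shows "0 \<le> conv_pow c k m"
  using assms by (induction k arbitrary: m) (auto intro!: sum_nonneg)

lemma conv_pow_gf_sums:
  assumes c_nonneg: "\<And>j. 0 \<le> c j" and "0 \<le> z" and gf: "(\<lambda>n. c n * z ^ n) sums C"
  shows "(\<lambda>m. conv_pow c k m * z ^ m) sums C ^ k"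
proof (induction k)
  case 0
  have "(\<lambda>m. conv_pow c 0 m * z ^ m) = (\<lambda>m. if m = 0 then 1 else 0)" by auto
  then show ?case using sums_single[of 0 "\<lambda>_. 1 :: real"] by simp
next
  case (Suc k)
  have "summable (\<lambda>i. norm (c i * z ^ i))" "summable (\<lambda>i. norm (conv_pow c k i * z ^ i))"
    using gf Suc conv_pow_nonneg[OF c_nonneg] c_nonneg \<open>0 \<le> z\<close> by (simp_all add: sums_summable)
  from Cauchy_product_sums[OF this] have
    "(\<lambda>m. \<Sum>i\<le>m. c i * z ^ i * (conv_pow c k (m - i) * z ^ (m - i))) sums (C * C ^ k)"
    using gf Suc by (simp add: sums_iff)
  moreover have "(\<Sum>i\<le>m. c i * z ^ i * (conv_pow c k (m - i) * z ^ (m - i)))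
      = conv_pow c (Suc k) m * z ^ m" for m
  proof -
    have pointwise: "c i * z ^ i * (conv_pow c k (m - i) * z ^ (m - i))
        = c i * conv_pow c k (m - i) * z ^ m" if "i \<le> m" for i
      using that by (simp add: mult_ac flip: power_add)
    show ?thesis
      unfolding conv_pow.simps sum_distrib_right by (rule sum.cong) (simp_all add: pointwise)
  qed
  ultimately show ?case by simp
qed

lemma sums_swap_nonneg:
  fixes f :: "nat \<Rightarrow> nat \<Rightarrow> real"
  assumes nonneg: "\<And>k m. 0 \<le> f k m" and rows: "\<And>k. f k sums g k" and total: "g sums T"
  shows "summable (\<lambda>k. f k m)" and "(\<lambda>m. \<Sum>k. f k m) sums T"
proof -
  have rows_has_sum: "(f k has_sum g k) UNIV" for k
    using sums_nonneg_imp_has_sum[OF rows nonneg] .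
  have "(g has_sum T) UNIV"
    using rows nonneg
    by (intro sums_nonneg_imp_has_sum[OF total]) (metis sums_unique suminf_nonneg sums_summable)
  moreover have "(\<lambda>(k, m). f k m) summable_on UNIV \<times> UNIV"
    using rows_has_sum calculation nonneg
    by (intro summable_on_SigmaI[where g = g]) (auto dest: has_sum_imp_summable)
  ultimately have "((\<lambda>(k, m). f k m) has_sum T) (UNIV \<times> UNIV)"
    using rows_has_sum by (intro has_sum_SigmaI[where g = g]) auto
  then have swapped: "((\<lambda>(m, k). f k m) has_sum T) (UNIV \<times> UNIV)"
    by (subst (asm) has_sum_swap) simp
  have "(\<lambda>k. f k m) summable_on UNIV" for m
    using summable_on_SigmaD1[OF has_sum_imp_summable[OF swapped]] by simp
  then show col_summable: "summable (\<lambda>k. f k m)" for m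
    using nonneg by (simp add: summable_on_UNIV_nonneg_real_iff)
  have "((\<lambda>m. \<Sum>k. f k m) has_sum T) UNIV"
    using sums_nonneg_imp_has_sum[OF summable_sums[OF col_summable] nonneg]
    by (intro has_sum_Sigma'[OF swapped]) simp
  then show "(\<lambda>m. \<Sum>k. f k m) sums T" by (rule has_sum_imp_sums)
qed

lemma compound_poisson_gf_sums:
  fixes c :: "nat \<Rightarrow> real"
  assumes c_nonneg: "\<And>n. 0 \<le> c n"
    and gf: "\<And>w. 0 \<le> w \<Longrightarrow> w < 1 \<Longrightarrow> (\<lambda>n. c n * w ^ n) sums C w"
    and "0 \<le> z" "z < 1"
  shows "(\<lambda>m. (\<Sum>k. exp (- L) / fact k * conv_pow c k m) * z ^ m) sums exp (C z - L)"
proof -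
  define f where "f w k m = exp (- L) / fact k * conv_pow c k m * w ^ m" for w k m
  have nonneg: "0 \<le> f w k m" if "0 \<le> w" for w k m
    using that conv_pow_nonneg[OF c_nonneg] by (simp add: f_def)
  have rows: "f w k sums (exp (- L) / fact k * C w ^ k)" if w: "0 \<le> w" "w < 1" for w k
    using sums_mult[OF conv_pow_gf_sums[OF c_nonneg w(1) gf[OF w]], of "exp (- L) / fact k"]
    by (simp add: f_def[abs_def] mult.assoc)
  have total: "(\<lambda>k. exp (- L) / fact k * C w ^ k) sums exp (C w - L)" for w
    using sums_mult[OF exp_converges[of "C w"], of "exp (- L)"]
    by (simp add: exp_diff exp_minus field_simps)
  have swap: "summable (\<lambda>k. f w k m)" "(\<lambda>m. \<Sum>k. f w k m) sums exp (C w - L)"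
    if w: "0 \<le> w" "w < 1" for w m
    using sums_swap_nonneg[OF nonneg[OF w(1)] rows[OF w] total] by auto
  (* needed also for z = 0, hence read off at the interior point 1/2 *)
  have "summable (\<lambda>k. exp (- L) / fact k * conv_pow c k m)" for m
    using summable_mult2[OF swap(1)[of "1 / 2" m], of "2 ^ m"] by (simp add: f_def power_one_over)
  then have "(\<Sum>k. f z k m) = (\<Sum>k. exp (- L) / fact k * conv_pow c k m) * z ^ m" for m
    unfolding f_def by (rule suminf_mult2[symmetric])
  then show ?thesis using swap(2)[OF assms(3,4)] by simp
qed

(* Kendall's generating function of a clone of age t; (b / a - z) / (1 - z) is the paper's \<xi>. *)
definition bd_pgf :: "real \<Rightarrow> real \<Rightarrow> real \<Rightarrow> real \<Rightarrow> real" where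
  "bd_pgf a b t z =
     1 - (a - b) / a * exp ((a - b) * t) / (exp ((a - b) * t) - (b / a - z) / (1 - z))"

lemma bd_pmf_parameters:
  fixes a b t :: real
  assumes "b < a" "0 \<le> b" "0 \<le> t"
  defines "E \<equiv> exp ((a - b) * t)"
  shows "1 \<le> E" "0 < a * E - b"
    "0 \<le> b * (E - 1) / (a * E - b)" "b * (E - 1) / (a * E - b) < 1"
    "0 \<le> a * (E - 1) / (a * E - b)" "a * (E - 1) / (a * E - b) < 1"
proof -
  show E: "1 \<le> E" unfolding E_def using assms by simp
  then have "a \<le> a * E" using assms by simp
  then show D: "0 < a * E - b" using assms by linarith
  show "0 \<le> b * (E - 1) / (a * E - b)" "0 \<le> a * (E - 1) / (a * E - b)"
    using D E assms by simp_all
  have "b * E < a * E" using E assms by simp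
  then show "b * (E - 1) / (a * E - b) < 1" "a * (E - 1) / (a * E - b) < 1"
    using D assms by (simp_all add: algebra_simps)
qed

lemma bd_pmf_nonneg:
  assumes "b < a" "0 \<le> b" "0 \<le> t"
  shows "0 \<le> bd_pmf a b t n"
  using bd_pmf_parameters[OF assms] unfolding bd_pmf_def Let_def by auto

lemma bd_pmf_continuous_on_birth_time:
  assumes "b < a" "0 \<le> b"
  shows "continuous_on {..tau} (\<lambda>s. bd_pmf a b (tau - s) n)"
proof -
  have "\<forall>s\<in>{..tau}. a * exp ((a - b) * (tau - s)) - b \<noteq> 0"
    using bd_pmf_parameters(2)[OF assms, of "tau - _"] by force
  then show ?thesis
    by (cases n) (auto intro!: continuous_intros simp: bd_pmf_def Let_def)
qed

lemma bd_pmf_gf_sums: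
  assumes "b < a" "0 \<le> b" "0 \<le> t" "\<bar>z\<bar> < 1"
  shows "(\<lambda>n. bd_pmf a b t n * z ^ n) sums bd_pgf a b t z"
proof -
  define E where "E = exp ((a - b) * t)"
  define p0 where "p0 = b * (E - 1) / (a * E - b)"
  define \<eta> where "\<eta> = a * (E - 1) / (a * E - b)"
  note params = bd_pmf_parameters[OF assms(1-3), folded E_def, folded p0_def \<eta>_def]
  have "\<bar>\<eta> * z\<bar> \<le> \<eta>" using params assms(4) by (simp add: abs_mult mult_left_le)
  then have "norm (\<eta> * z) < 1" using params by simp
  from sums_mult[OF geometric_sums[OF this], of "(1 - p0) * (1 - \<eta>) * z"]
  have "(\<lambda>n. bd_pmf a b t (Suc n) * z ^ Suc n) sums ((1 - p0) * (1 - \<eta>) * z / (1 - \<eta> * z))"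
    by (simp add: bd_pmf_def Let_def flip: E_def p0_def \<eta>_def) (simp add: power_mult_distrib mult_ac)
  then have "(\<lambda>n. bd_pmf a b t n * z ^ n) sums (p0 + (1 - p0) * (1 - \<eta>) * z / (1 - \<eta> * z))"
    by (subst (asm) sums_Suc_iff) (simp add: bd_pmf_def Let_def flip: E_def p0_def add.commute)
  moreover have "p0 + (1 - p0) * (1 - \<eta>) * z / (1 - \<eta> * z) = bd_pgf a b t z"
  proof -
    define D where "D = a * E - b"
    define M where "M = a * E * (1 - z) - b + a * z"
    have "a * z * (E - 1) \<le> a * (E - 1)"
      using params assms by (intro mult_right_mono) auto
    then have "0 < M" unfolding M_def using assms by (simp add: algebra_simps)
    moreover have "0 < D" "0 < a" "0 < 1 - z" using params assms unfolding D_def by auto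
    moreover have "1 - p0 = (a - b) * E / D" "1 - \<eta> = (a - b) / D" "1 - \<eta> * z = M / D"
      "E - (b / a - z) / (1 - z) = M / (a * (1 - z))"
      using calculation unfolding p0_def \<eta>_def D_def M_def by (simp_all add: field_simps)
    ultimately have
      "p0 + (1 - p0) * (1 - \<eta>) * z / (1 - \<eta> * z)
         = b * (E - 1) / D + (a - b) * E / D * ((a - b) / D) * z / (M / D)"
      "bd_pgf a b t z = 1 - (a - b) / a * E / (M / (a * (1 - z)))"
      unfolding bd_pgf_def E_def[symmetric] p0_def D_def by simp_all
    moreover have "b * (E - 1) / D + (a - b) * E / D * ((a - b) / D) * z / (M / D)
        = 1 - (a - b) / a * E / (M / (a * (1 - z)))"
      using \<open>0 < M\<close> \<open>0 < D\<close> \<open>0 < a\<close> \<open>0 < 1 - z\<close>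
      by (simp add: field_simps) (simp add: D_def M_def algebra_simps)
    ultimately show ?thesis by simp
  qed
  ultimately show ?thesis by simp
qed

lemma bd_pgf_le_1:
  assumes "b < a" "0 \<le> b" "0 \<le> t" "z < 1"
  shows "bd_pgf a b t z \<le> 1"
proof -
  have "b / a - z < 1 - z" using assms by simp
  then have "(b / a - z) / (1 - z) < 1" using assms by simp
  then have "0 < exp ((a - b) * t) - (b / a - z) / (1 - z)"
    using bd_pmf_parameters(1)[OF assms(1-3)] by linarith
  then show ?thesis unfolding bd_pgf_def using assms by simp
qed

lemma clone_intensity_nonneg:
  assumes "0 \<le> \<nu>" "b < a" "0 \<le> b"
  shows "0 \<le> clone_intensity \<delta> \<nu> a b tau n"
  unfolding clone_intensity_def
proof (rule integral_nonneg)
  show "(\<lambda>s. \<nu> * exp (\<delta> * s) * bd_pmf a b (tau - s) n) integrable_on {0..tau}"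
    using continuous_on_subset[OF bd_pmf_continuous_on_birth_time[OF assms(2,3)]]
    by (intro integrable_continuous_interval continuous_intros) auto
  show "0 \<le> \<nu> * exp (\<delta> * s) * bd_pmf a b (tau - s) n" if "s \<in> {0..tau}" for s
    using that bd_pmf_nonneg[OF assms(2,3)] assms(1) by simp
qed

lemma clone_intensity_gf_sums:
  assumes "0 \<le> \<nu>" "b < a" "0 \<le> b" "0 \<le> z" "z < 1"
  shows "(\<lambda>n. clone_intensity \<delta> \<nu> a b tau n * z ^ n) sums
           integral {0..tau} (\<lambda>s. \<nu> * exp (\<delta> * s) * bd_pgf a b (tau - s) z)"
proof -
  define h where "h n s = \<nu> * exp (\<delta> * s) * bd_pmf a b (tau - s) n * z ^ n" for n s
  define g where "g s = \<nu> * exp (\<delta> * s) * bd_pgf a b (tau - s) z" for s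
  have h_integrable: "h n integrable_on {0..tau}" for n
    unfolding h_def using continuous_on_subset[OF bd_pmf_continuous_on_birth_time[OF assms(2,3)]]
    by (intro integrable_continuous_interval continuous_intros) auto
  have h_sums: "(\<lambda>n. h n s) sums g s" if "s \<in> {0..tau}" for s
    using sums_mult[OF bd_pmf_gf_sums[OF assms(2,3), of "tau - s" z], of "\<nu> * exp (\<delta> * s)"]
      that assms by (simp add: h_def g_def mult_ac)
  have h_nonneg: "0 \<le> h n s" if "s \<in> {0..tau}" for n s
    using that bd_pmf_nonneg[OF assms(2,3)] assms by (simp add: h_def)
  have partial_sum_bound: "norm (\<Sum>n<k. h n s) \<le> \<nu> * exp (\<delta> * s)" if s: "s \<in> {0..tau}" for k s
  proof -
    have "(\<Sum>n<k. h n s) \<le> g s"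
      using h_sums[OF s] h_nonneg[OF s] by (metis sum_le_suminf sums_summable sums_unique finite_lessThan)
    also have "g s \<le> \<nu> * exp (\<delta> * s)"
      unfolding g_def using bd_pgf_le_1[OF assms(2,3) _ assms(5), of "tau - s"] s assms(1)
      by (simp add: mult_left_le)
    finally show ?thesis using h_nonneg[OF s] by (simp add: sum_nonneg)
  qed
  have "(\<lambda>k. integral {0..tau} (\<lambda>s. \<Sum>n<k. h n s)) \<longlonglongrightarrow> integral {0..tau} g"
  proof (rule dominated_convergence(2)[where h = "\<lambda>s. \<nu> * exp (\<delta> * s)"])
    show "(\<lambda>s. \<Sum>n<k. h n s) integrable_on {0..tau}" for k
      using h_integrable by (simp add: Henstock_Kurzweil_Integration.integrable_sum)
    show "(\<lambda>s. \<nu> * exp (\<delta> * s)) integrable_on {0..tau}"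
      by (intro integrable_continuous_interval continuous_intros)
  qed (use h_sums partial_sum_bound in \<open>auto simp: sums_def\<close>)
  moreover have "integral {0..tau} (\<lambda>s. \<Sum>n<k. h n s)
      = (\<Sum>n<k. clone_intensity \<delta> \<nu> a b tau n * z ^ n)" for k
  proof -
    have "integral {0..tau} (\<lambda>s. \<Sum>n<k. h n s) = (\<Sum>n<k. integral {0..tau} (h n))"
      using h_integrable by (simp add: Henstock_Kurzweil_Integration.integral_sum)
    then show ?thesis by (simp add: h_def[abs_def] clone_intensity_def)
  qed
  ultimately show ?thesis unfolding sums_def g_def by simp
qed

lemma B_pgf_eq_exp_integral:
  fixes \<delta> N :: real
  assumes "0 \<le> \<nu>" "b < a" "0 \<le> b" "0 \<le> z" "z < 1"
  defines "tau \<equiv> ln N / \<delta>"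
  shows "B_pgf \<delta> \<nu> a b N z =
           exp (integral {0..tau} (\<lambda>s. \<nu> * exp (\<delta> * s) * bd_pgf a b (tau - s) z)
                - integral {0..tau} (\<lambda>s. \<nu> * exp (\<delta> * s)))"
proof -
  have "(\<lambda>m. B_pmf \<delta> \<nu> a b N m * z ^ m) sums
          exp (integral {0..tau} (\<lambda>s. \<nu> * exp (\<delta> * s) * bd_pgf a b (tau - s) z)
               - integral {0..tau} (\<lambda>s. \<nu> * exp (\<delta> * s)))"
    unfolding B_pmf_def Let_def tau_def[symmetric]
    using clone_intensity_nonneg clone_intensity_gf_sums assms
    by (intro compound_poisson_gf_sums) auto
  then show ?thesis unfolding B_pgf_def by (simp add: sums_iff)
qed

lemma has_integral_inverse_exp_minus_const:
  fixes d T \<xi> :: real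
  assumes "0 < d" "0 \<le> T" "\<xi> < 1"
  shows "((\<lambda>s. 1 / (exp (d * (T - s)) - \<xi>)) has_integral
           (if \<xi> = 0 then (1 - exp (- d * T)) / d
            else (ln (1 - \<xi> * exp (- d * T)) - ln (1 - \<xi>)) / (d * \<xi>))) {0..T}"
proof -
  have ftc: "((\<lambda>s. 1 / (exp (d * (T - s)) - \<xi>)) has_integral (F T - F 0)) {0..T}"
    if "\<And>s. s \<le> T \<Longrightarrow> (F has_real_derivative 1 / (exp (d * (T - s)) - \<xi>)) (at s)" for F
    using that \<open>0 \<le> T\<close>
    by (intro fundamental_theorem_of_calculus)
      (auto simp: has_real_derivative_iff_has_vector_derivative[symmetric]
        intro: has_field_derivative_at_within)
  have exp_le_1: "exp (d * (s - T)) \<le> 1" if "s \<le> T" for s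
    using that \<open>0 < d\<close> by (simp add: mult_nonneg_nonpos)
  have exp_flip: "exp (d * (T - s)) = 1 / exp (d * (s - T))" for s
    by (simp add: exp_minus_inverse field_simps flip: exp_add)
  show ?thesis
  proof (cases "\<xi> = 0")
    case True
    define F where "F s = exp (d * (s - T)) / d" for s
    have "(F has_real_derivative 1 / (exp (d * (T - s)) - \<xi>)) (at s)" for s
      unfolding F_def exp_flip True using \<open>0 < d\<close>
      by (auto intro!: derivative_eq_intros)
    from ftc[OF this] show ?thesis using True by (simp add: F_def diff_divide_distrib)
  next
    case False
    define F where "F s = - ln (1 - \<xi> * exp (d * (s - T))) / (d * \<xi>)" for s
    have "(F has_real_derivative 1 / (exp (d * (T - s)) - \<xi>)) (at s)" if "s \<le> T" for s
    proof -
      have "\<xi> * exp (d * (s - T)) < 1"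
      proof (cases "\<xi> \<le> 0")
        case True
        then show ?thesis using mult_nonpos_nonneg[of \<xi> "exp (d * (s - T))"] by simp
      next
        case False
        then have "\<xi> * exp (d * (s - T)) \<le> \<xi>" using exp_le_1[OF that] by (intro mult_left_le) auto
        then show ?thesis using \<open>\<xi> < 1\<close> by simp
      qed
      then show ?thesis
        unfolding F_def exp_flip using \<open>0 < d\<close> False
        by (auto intro!: derivative_eq_intros simp: field_simps)
    qed
    from ftc[OF this] show ?thesis using False by (simp add: F_def diff_divide_distrib)
  qed
qed

lemma B_pgf_critical_eq_exp_integral:
  fixes a b \<nu> N z I :: real
  assumes "0 \<le> \<nu>" "b < a" "0 \<le> b" "1 < N" "0 \<le> z" "z < 1"
  defines "\<xi> \<equiv> (b / a - z) / (1 - z)" and "tau \<equiv> ln N / (a - b)"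
  assumes I: "((\<lambda>s. 1 / (exp ((a - b) * (tau - s)) - \<xi>)) has_integral I) {0..tau}"
  shows "B_pgf (a - b) \<nu> a b N z = exp (- (\<nu> * (a - b) * N / a) * I)"
proof -
  define d where "d = a - b"
  have "0 < d" "0 < a" "\<xi> < 1" using assms by (simp_all add: d_def \<xi>_def)
  have deficit: "\<nu> * exp (d * s) * bd_pgf a b (tau - s) z - \<nu> * exp (d * s)
      = - (\<nu> * d * N / a) * (1 / (exp (d * (tau - s)) - \<xi>))" if "s \<in> {0..tau}" for s
  proof -
    have "exp (d * tau) = N" using \<open>0 < d\<close> \<open>1 < N\<close> by (simp add: tau_def d_def)
    then have "exp (d * s) * exp (d * (tau - s)) = N" by (simp add: algebra_simps flip: exp_add)
    moreover have "1 \<le> exp (d * (tau - s))" using that \<open>0 < d\<close> by simp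
    ultimately show ?thesis using \<open>\<xi> < 1\<close> \<open>0 < a\<close>
      unfolding bd_pgf_def \<xi>_def[symmetric] d_def[symmetric] by (simp add: field_simps)
  qed
  let ?L = "integral {0..tau} (\<lambda>s. \<nu> * exp (d * s))"
  have L: "((\<lambda>s. \<nu> * exp (d * s)) has_integral ?L) {0..tau}"
    by (intro integrable_integral integrable_continuous_interval continuous_intros)
  have "((\<lambda>s. \<nu> * exp (d * s) * bd_pgf a b (tau - s) z - \<nu> * exp (d * s))
      has_integral - (\<nu> * d * N / a) * I) {0..tau}"
    using deficit by (intro has_integral_eq[OF _ has_integral_mult_right[OF I[folded d_def]]]) simp
  from has_integral_add[OF this L]
  have "((\<lambda>s. \<nu> * exp (d * s) * bd_pgf a b (tau - s) z)
      has_integral - (\<nu> * d * N / a) * I + ?L) {0..tau}"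
    by simp
  then show ?thesis
    using B_pgf_eq_exp_integral[of \<nu> b a z "a - b" N] assms
    by (simp add: integral_unique flip: d_def tau_def)
qed

lemma B_pgf_critical:
  fixes a b \<nu> N z :: real
  assumes "0 \<le> \<nu>" "b < a" "0 \<le> b" "1 < N" "0 \<le> z" "z < 1"
  defines "\<xi> \<equiv> (b / a - z) / (1 - z)"
  shows "z \<noteq> b / a \<Longrightarrow>
           B_pgf (a - b) \<nu> a b N z = ((1 - \<xi>) / (1 - \<xi> / N)) powr (N * (\<nu> / a) / \<xi>)"
    and "z = b / a \<Longrightarrow> B_pgf (a - b) \<nu> a b N z = exp (- (N * (\<nu> / a)) * (1 - 1 / N))"
proof -
  define d where "d = a - b"
  define tau where "tau = ln N / d"
  have "0 < d" "0 < a" "0 \<le> tau" "\<xi> < 1" using assms by (auto simp: d_def tau_def \<xi>_def)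
  have "exp (- d * tau) = 1 / N"
    using \<open>0 < d\<close> \<open>1 < N\<close> by (simp add: tau_def exp_minus inverse_eq_divide)
  then have "((\<lambda>s. 1 / (exp (d * (tau - s)) - \<xi>)) has_integral
      (if \<xi> = 0 then (1 - 1 / N) / d else (ln (1 - \<xi> / N) - ln (1 - \<xi>)) / (d * \<xi>))) {0..tau}"
    using has_integral_inverse_exp_minus_const[OF \<open>0 < d\<close> \<open>0 \<le> tau\<close> \<open>\<xi> < 1\<close>]
    by (simp split: if_splits)
  from B_pgf_critical_eq_exp_integral[OF assms(1-6) this[unfolded \<xi>_def d_def tau_def]]
  have B: "B_pgf (a - b) \<nu> a b N z = exp (- (\<nu> * d * N / a) *
      (if \<xi> = 0 then (1 - 1 / N) / d else (ln (1 - \<xi> / N) - ln (1 - \<xi>)) / (d * \<xi>)))"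
    unfolding \<xi>_def d_def .
  show "B_pgf (a - b) \<nu> a b N z = ((1 - \<xi>) / (1 - \<xi> / N)) powr (N * (\<nu> / a) / \<xi>)"
    if "z \<noteq> b / a"
  proof -
    have "\<xi> \<noteq> 0" using that \<open>z < 1\<close> by (simp add: \<xi>_def)
    have "\<xi> / N < 1" using \<open>\<xi> < 1\<close> \<open>1 < N\<close> by (simp add: pos_divide_less_eq)
    then have pos: "0 < 1 - \<xi>" "0 < 1 - \<xi> / N" using \<open>\<xi> < 1\<close> by simp_all
    have "((1 - \<xi>) / (1 - \<xi> / N)) powr (N * (\<nu> / a) / \<xi>)
        = exp (N * (\<nu> / a) / \<xi> * (ln (1 - \<xi>) - ln (1 - \<xi> / N)))"
      using pos \<open>\<xi> < 1\<close> \<open>1 < N\<close> by (simp add: powr_def ln_div)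
    then show ?thesis
      using B \<open>\<xi> \<noteq> 0\<close> \<open>0 < d\<close> \<open>0 < a\<close> by (simp add: field_simps)
  qed
  show "B_pgf (a - b) \<nu> a b N z = exp (- (N * (\<nu> / a)) * (1 - 1 / N))" if "z = b / a"
  proof -
    have "\<xi> = 0" using that by (simp add: \<xi>_def)
    then show ?thesis using B \<open>0 < d\<close> \<open>0 < a\<close> by (simp add: field_simps)
  qed
qed

lemma xi_form_eq_y_form:
  fixes \<xi> N K :: real
  assumes "\<xi> < 1" "\<xi> \<noteq> 0" "1 \<le> N"
  defines "y \<equiv> - \<xi> / (1 - \<xi>)"
  shows "((1 - \<xi>) / (1 - \<xi> / N)) powr (K / \<xi>) = (1 - (1 - 1 / N) * y) powr (K * (1 - y) / y)"
proof -
  have "\<xi> / N < 1" using assms by (simp add: pos_divide_less_eq)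
  then have "0 < 1 - \<xi>" "0 < 1 - \<xi> / N" using assms by simp_all
  moreover have "1 - (1 - 1 / N) * y = (1 - \<xi> / N) / (1 - \<xi>)" "K * (1 - y) / y = - (K / \<xi>)"
    using assms calculation by (simp_all add: y_def field_simps)
  ultimately show ?thesis by (simp add: powr_minus_divide powr_divide)
qed

lemma B_pgf_critical_y_form:
  fixes a b \<nu> N z :: real
  assumes "0 \<le> \<nu>" "b < a" "0 \<le> b" "1 < N" "0 \<le> z" "z < 1" "z \<noteq> b / a"
  defines "q \<equiv> b / a"
  defines "y \<equiv> (z - q) / (1 - q)"
  shows "B_pgf (a - b) \<nu> a b N z = (1 - (1 - 1 / N) * y) powr (N * (\<nu> / a) * (1 - y) / y)"
proof -
  define \<xi> where "\<xi> = (q - z) / (1 - z)"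
  have "q < 1" using assms by (simp add: q_def)
  then have "\<xi> < 1" using \<open>z < 1\<close> by (simp add: \<xi>_def)
  have "1 - \<xi> = (1 - q) / (1 - z)" using \<open>z < 1\<close> by (simp add: \<xi>_def field_simps)
  then have y: "y = - \<xi> / (1 - \<xi>)"
    using \<open>q < 1\<close> \<open>z < 1\<close> by (simp add: y_def \<xi>_def divide_simps)
  have "\<xi> \<noteq> 0" using assms by (simp add: \<xi>_def q_def)
  have "B_pgf (a - b) \<nu> a b N z = ((1 - \<xi>) / (1 - \<xi> / N)) powr (N * (\<nu> / a) / \<xi>)"
    using B_pgf_critical(1)[OF assms(1-7)] unfolding \<xi>_def q_def .
  also have "\<dots> = (1 - (1 - 1 / N) * y) powr (N * (\<nu> / a) * (1 - y) / y)"
    unfolding y using \<open>\<xi> < 1\<close> \<open>\<xi> \<noteq> 0\<close> \<open>1 < N\<close> by (intro xi_form_eq_y_form) auto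
  finally show ?thesis .
qed

lemma B_pmf_critical_zero:
  fixes a b \<nu> N :: real
  assumes "0 \<le> \<nu>" "b < a" "0 < b" "1 < N"
  defines "q \<equiv> b / a"
  shows "B_pmf (a - b) \<nu> a b N 0 = (1 + q * (1 - 1 / N) / (1 - q)) powr (- (N * (\<nu> / a)) / q)"
proof -
  have "0 < q" "q < 1" using assms by (simp_all add: q_def)
  have "B_pmf (a - b) \<nu> a b N 0 = B_pgf (a - b) \<nu> a b N 0" by (simp add: B_pgf_def)
  also have "\<dots> = (1 - (1 - 1 / N) * ((0 - q) / (1 - q)))
      powr (N * (\<nu> / a) * (1 - (0 - q) / (1 - q)) / ((0 - q) / (1 - q)))"
    using B_pgf_critical_y_form[of \<nu> b a N 0] assms \<open>0 < q\<close> by (simp add: q_def)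
  also have "1 - (1 - 1 / N) * ((0 - q) / (1 - q)) = 1 + q * (1 - 1 / N) / (1 - q)"
    by (simp add: field_simps)
  also have "N * (\<nu> / a) * (1 - (0 - q) / (1 - q)) / ((0 - q) / (1 - q)) = - (N * (\<nu> / a)) / q"
    using \<open>0 < q\<close> \<open>q < 1\<close> assms by (simp add: field_simps)
  finally show ?thesis .
qed

theorem mainTheorem5:
  fixes \<delta> \<nu> \<alpha> \<beta> N :: real
  assumes "\<delta> > 0" and "\<nu> > 0" and "\<alpha> > \<beta>" and "\<beta> \<ge> 0" and "N > 1"
    and gamma1: "\<delta> = \<alpha> - \<beta>"
  shows "(\<forall>z. 0 \<le> z \<and> z < 1 \<longrightarrow>
           (let q = \<beta> / \<alpha>; \<mu> = \<nu> / \<alpha>; \<theta> = N * \<mu>; \<phi> = 1 - 1 / N;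
                \<xi> = (q - z) / (1 - z); y = (z - q) / (1 - q)
            in (z \<noteq> q \<longrightarrow>
                  B_pgf \<delta> \<nu> \<alpha> \<beta> N z = ((1 - \<xi>) / (1 - \<xi> / N)) powr (N * \<mu> / \<xi>) \<and>
                  B_pgf \<delta> \<nu> \<alpha> \<beta> N z = (1 - \<phi> * y) powr (\<theta> * (1 - y) / y))
             \<and> (z = q \<longrightarrow> B_pgf \<delta> \<nu> \<alpha> \<beta> N z = exp (- \<theta> * \<phi>)))) \<and>
         (\<beta> > 0 \<longrightarrow>
           (let q = \<beta> / \<alpha>; \<theta> = N * (\<nu> / \<alpha>); \<phi> = 1 - 1 / N
            in B_pmf \<delta> \<nu> \<alpha> \<beta> N 0 = (1 + q * \<phi> / (1 - q)) powr (- \<theta> / q)))"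
proof -
  have "0 \<le> \<nu>" using assms by simp
  note B_pgf_critical[OF \<open>0 \<le> \<nu>\<close> \<open>\<alpha> > \<beta>\<close> \<open>\<beta> \<ge> 0\<close> \<open>N > 1\<close>]
    B_pgf_critical_y_form[OF \<open>0 \<le> \<nu>\<close> \<open>\<alpha> > \<beta>\<close> \<open>\<beta> \<ge> 0\<close> \<open>N > 1\<close>]
    B_pmf_critical_zero[OF \<open>0 \<le> \<nu>\<close> \<open>\<alpha> > \<beta>\<close> _ \<open>N > 1\<close>]
  then show ?thesis unfolding Let_def gamma1 by blast
qed

end
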